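(* Let $\mathcal{D}\subset\mathbb{R}^d$ be a compact convex set and let $k$ be the squared exponential kernel $k(x_1,x_2)=M_k^2\exp(-\|x_2-x_1\|_2^2/(2l^2))$. Let $(f_t)_{t\ge1}$, $f_t:\mathcal{D}\to\mathbb{R}$, be a sequence of reward functions such that (i) for all $t$, $f_t$ lies in the RKHS $\mathcal{H}_k$ with $\|f_t\|_k\le B$, and (ii) there is $\alpha\ge0$ such that for all $t_1<t_2$, $f_{t_1}(x)=f_{t_2}(x)+v_{t_1,t_2}$ with $v_{t_1,t_2}$ zero-mean sub-Gaussian of variance $\sigma^2(t_2-t_1)^\alpha$, independent across times. Fix a horizon $T$, and suppose that, relative to the target $f_T$, each main observation satisfies $y_t=f_T(x_t)+\epsilon_t$ with $\epsilon_t\sim\mathcal{N}(0,\sigma^2(1+(T-t)^\alpha))$, where $\alpha>1$. Consider any online algorithm $\pi$ that, at each step $t$, selects a main evaluation point $x_t$ and may additionally perform $n_t\ge0$ side queries (at arbitrary points of $\mathcal{D}$), for a total of $N_T=\sum_{t=1}^T n_t$ additional queries up to time $T$. If the sequence $(N_T)_{T\ge0}$ is bounded (i.e. there exists $C$ such that $N_T\le C$ for all $T$), then the expected cumulative dynamic regret $R_T=\sum_{t=1}^T\big(f_t(x_t^* )-f_t(x_t)\big)$, with $x_t^*=\arg\max_{x\in\mathcal{D}}f_t(x)$, satisfies (in the minimax sense over such instances) $$\mathbb{E}[R_T]\ge\Omega(T).$$ In other words, a uniformly bounded total number of additional queries is insufficient to guarantee sublinear regret.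
   Context: Time-varying Gaussian process bandit optimization in the frequentist setting, where temporal variation is modeled by uncertainty injection: past observations become noisier the further back in time they are, with variance growing as $(T-t)^\alpha$. The learner may supplement bandit feedback with additional (side) queries. *)

theory Defs
  imports "HOL-Probability.Probability"
begin

definition se_kernel :: "real \<Rightarrow> real \<Rightarrow> 'a::real_normed_vector \<Rightarrow> 'a \<Rightarrow> real" where
  "se_kernel Mk l x1 x2 = Mk\<^sup>2 * exp (- (norm (x2 - x1))\<^sup>2 / (2 * l\<^sup>2))"

definition kfun :: "('a \<Rightarrow> 'a \<Rightarrow> real) \<Rightarrow> (real \<times> 'a) list \<Rightarrow> 'a \<Rightarrow> real" where
  "kfun k ps x = (\<Sum>(c, z)\<leftarrow>ps. c * k z x)"

definition knorm2 :: "('a \<Rightarrow> 'a \<Rightarrow> real) \<Rightarrow> (real \<times> 'a) list \<Rightarrow> real" where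
  "knorm2 k ps = (\<Sum>(c, z)\<leftarrow>ps. \<Sum>(c', z')\<leftarrow>ps. c * c' * k z z')"

definition kneg :: "(real \<times> 'a) list \<Rightarrow> (real \<times> 'a) list" where
  "kneg ps = map (\<lambda>(c, z). (- c, z)) ps"

text \<open>f (restricted to D) belongs to the RKHS H_k(D) with norm at most B:
  f is the pointwise limit on D of a sequence of finite kernel expansions
  (centres in D) that is Cauchy in the pre-Hilbert norm, and the limit of
  the norms (= the RKHS norm of f) is at most B.\<close>

definition rkhs_ball :: "('a \<Rightarrow> 'a \<Rightarrow> real) \<Rightarrow> 'a set \<Rightarrow> real \<Rightarrow> ('a \<Rightarrow> real) \<Rightarrow> bool" where
  "rkhs_ball k D B f \<longleftrightarrow>
     (\<exists>P :: nat \<Rightarrow> (real \<times> 'a) list.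
        (\<forall>n. snd ` set (P n) \<subseteq> D) \<and>
        (\<forall>\<epsilon>>0. \<exists>N. \<forall>m\<ge>N. \<forall>n\<ge>N. knorm2 k (P m @ kneg (P n)) < \<epsilon>) \<and>
        (\<forall>x\<in>D. (\<lambda>n. kfun k (P n) x) \<longlonglongrightarrow> f x) \<and>
        (\<exists>L. (\<lambda>n. sqrt (knorm2 k (P n))) \<longlonglongrightarrow> L \<and> L \<le> B))"

text \<open>Randomness: w (internal randomisation of the algorithm) and z (observation
  noise), both i.i.d. standard normal sequences.\<close>

definition std_normal_measure :: "real measure" where
  "std_normal_measure = density lborel std_normal_density"

definition seq_measure :: "(nat \<Rightarrow> real) measure" where
  "seq_measure = PiM UNIV (\<lambda>_. std_normal_measure)"

definition seq_borel :: "(nat \<Rightarrow> real) measure" where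
  "seq_borel = PiM UNIV (\<lambda>_. borel)"

text \<open>An algorithm is given by query rules: the i-th query (i = 0,1,...) is
  a main evaluation if ismain i w ys, otherwise a side query, at point pt i w ys,
  where w is the internal randomness and ys the observations so far (only
  ys j with j < i may be used).  Admissible for horizon T with side-query budget C:
  points in D, non-anticipating, measurable, and at most C side queries are
  made before the T-th main query.\<close>

definition admissible_alg ::
  "'a::topological_space set \<Rightarrow> nat \<Rightarrow> nat \<Rightarrow>
   (nat \<Rightarrow> (nat \<Rightarrow> real) \<Rightarrow> (nat \<Rightarrow> real) \<Rightarrow> bool) \<Rightarrow>
   (nat \<Rightarrow> (nat \<Rightarrow> real) \<Rightarrow> (nat \<Rightarrow> real) \<Rightarrow> 'a) \<Rightarrow> bool" where
  "admissible_alg D C T ismain pt \<longleftrightarrow>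
     (\<forall>i w ys. pt i w ys \<in> D) \<and>
     (\<forall>i w ys ys'. (\<forall>j<i. ys j = ys' j) \<longrightarrow>
          ismain i w ys = ismain i w ys' \<and> pt i w ys = pt i w ys') \<and>
     (\<forall>i. (\<lambda>(w, ys). pt i w ys) \<in> borel_measurable (seq_borel \<Otimes>\<^sub>M seq_borel)) \<and>
     (\<forall>i. (\<lambda>(w, ys). ismain i w ys) \<in> measurable (seq_borel \<Otimes>\<^sub>M seq_borel) (count_space UNIV)) \<and>
     (\<forall>w ys. T \<le> card {i. i < T + C \<and> ismain i w ys})"

definition step_of :: "(nat \<Rightarrow> (nat \<Rightarrow> real) \<Rightarrow> (nat \<Rightarrow> real) \<Rightarrow> bool) \<Rightarrow>
    nat \<Rightarrow> (nat \<Rightarrow> real) \<Rightarrow> (nat \<Rightarrow> real) \<Rightarrow> nat" where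
  "step_of ismain i w ys = Suc (card {j. j < i \<and> ismain j w ys})"

text \<open>Observations: a query at step s (of horizon T) at point x returns
  f x + eps with eps ~ N(0, sigma^2 (1 + (T - s)^alpha)), independently.\<close>

fun obs_list ::
  "('a \<Rightarrow> real) \<Rightarrow> real \<Rightarrow> real \<Rightarrow> nat \<Rightarrow>
   (nat \<Rightarrow> (nat \<Rightarrow> real) \<Rightarrow> (nat \<Rightarrow> real) \<Rightarrow> bool) \<Rightarrow>
   (nat \<Rightarrow> (nat \<Rightarrow> real) \<Rightarrow> (nat \<Rightarrow> real) \<Rightarrow> 'a) \<Rightarrow>
   (nat \<Rightarrow> real) \<Rightarrow> (nat \<Rightarrow> real) \<Rightarrow> nat \<Rightarrow> real list" where
  "obs_list f \<sigma> \<alpha> T ismain pt w z 0 = []"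
| "obs_list f \<sigma> \<alpha> T ismain pt w z (Suc i) =
     (let h = obs_list f \<sigma> \<alpha> T ismain pt w z i;
          ys = (\<lambda>j. if j < i then h ! j else 0);
          s = step_of ismain i w ys
      in h @ [f (pt i w ys) + \<sigma> * sqrt (1 + real (T - s) powr \<alpha>) * z i])"

definition obs_seq ::
  "('a \<Rightarrow> real) \<Rightarrow> real \<Rightarrow> real \<Rightarrow> nat \<Rightarrow>
   (nat \<Rightarrow> (nat \<Rightarrow> real) \<Rightarrow> (nat \<Rightarrow> real) \<Rightarrow> bool) \<Rightarrow>
   (nat \<Rightarrow> (nat \<Rightarrow> real) \<Rightarrow> (nat \<Rightarrow> real) \<Rightarrow> 'a) \<Rightarrow>
   (nat \<Rightarrow> real) \<Rightarrow> (nat \<Rightarrow> real) \<Rightarrow> nat \<Rightarrow> real" where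
  "obs_seq f \<sigma> \<alpha> T ismain pt w z i = obs_list f \<sigma> \<alpha> T ismain pt w z (Suc i) ! i"

text \<open>Cumulative regret over the first T main queries (steps 1..T).\<close>

definition regret ::
  "'a set \<Rightarrow> ('a \<Rightarrow> real) \<Rightarrow> nat \<Rightarrow> nat \<Rightarrow>
   (nat \<Rightarrow> (nat \<Rightarrow> real) \<Rightarrow> (nat \<Rightarrow> real) \<Rightarrow> bool) \<Rightarrow>
   (nat \<Rightarrow> (nat \<Rightarrow> real) \<Rightarrow> (nat \<Rightarrow> real) \<Rightarrow> 'a) \<Rightarrow>
   (nat \<Rightarrow> real) \<Rightarrow> (nat \<Rightarrow> real) \<Rightarrow> real" where
  "regret D f T C ismain pt w ys =
     (\<Sum>i<T + C. if ismain i w ys \<and> card {j. j < i \<and> ismain j w ys} < T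
                then (SUP x\<in>D. f x) - f (pt i w ys) else 0)"

definition expected_regret ::
  "'a set \<Rightarrow> ('a \<Rightarrow> real) \<Rightarrow> real \<Rightarrow> real \<Rightarrow> nat \<Rightarrow> nat \<Rightarrow>
   (nat \<Rightarrow> (nat \<Rightarrow> real) \<Rightarrow> (nat \<Rightarrow> real) \<Rightarrow> bool) \<Rightarrow>
   (nat \<Rightarrow> (nat \<Rightarrow> real) \<Rightarrow> (nat \<Rightarrow> real) \<Rightarrow> 'a) \<Rightarrow> real" where
  "expected_regret D f \<sigma> \<alpha> T C ismain pt =
     (\<integral>p. regret D f T C ismain pt (fst p)
            (obs_seq f \<sigma> \<alpha> T ismain pt (fst p) (snd p)) \<partial>(seq_measure \<Otimes>\<^sub>M seq_measure))"

end

theory Submission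
  imports Defs
begin

text \<open>Two Gaussian bumps of RKHS norm \<open>B\<close> centred at distinct points \<open>a, b \<in> D\<close> form a hard
  pair: every point is far from \<open>a\<close> or from \<open>b\<close>, so each of the first \<open>T\<close> main queries costs a
  fixed gap under one of the two reward functions.  The observations form a causal Gaussian
  recursion, and a change of measure (Girsanov) controls the distance between their laws under the
  two instances by the sum of squared mean differences divided by the noise variances.  A query at
  step \<open>s\<close> has noise variance \<open>\<sigma>\<^sup>2 (1 + (T - s) powr \<alpha>)\<close>; for \<open>\<alpha> > 1\<close> the inverse variances
  are summable, and with at most \<open>C\<close> side queries each step carries at most \<open>C + 1\<close> queries, so
  this distance stays bounded as \<open>T\<close> grows.  Le Cam's two-point method then forces expected regret
  of order \<open>T\<close> on one of the two instances.\<close>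

section \<open>Standard normal measure\<close>

lemma prob_space_std_normal_measure: "prob_space std_normal_measure"
  unfolding std_normal_measure_def by (rule prob_space_normal_density) simp

lemma sets_std_normal_measure [measurable_cong]: "sets std_normal_measure = sets borel"
  unfolding std_normal_measure_def by simp

lemma measurable_std_normal_measure: "measurable std_normal_measure M = measurable borel M"
  by (rule measurable_cong_sets) (simp_all add: sets_std_normal_measure)

lemma std_normal_density_shift:
  "std_normal_density t * exp (d * t - d\<^sup>2 / 2) = std_normal_density (t - d)"
proof -
  have "exp (- t\<^sup>2 / 2) * exp (d * t - d\<^sup>2 / 2) = exp (- (t - d)\<^sup>2 / 2)"
    unfolding exp_add[symmetric] by (rule arg_cong[where f=exp]) (simp add: power2_diff field_simps)
  then show ?thesis unfolding std_normal_density_def by (simp add: mult.assoc)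
qed

lemma nn_integral_std_normal_tilt:
  fixes h :: "real \<Rightarrow> ennreal"
  assumes [measurable]: "h \<in> borel_measurable borel"
  shows "(\<integral>\<^sup>+ t. h t * ennreal (exp (d * t - d\<^sup>2 / 2)) \<partial>std_normal_measure)
       = (\<integral>\<^sup>+ t. h (t + d) \<partial>std_normal_measure)"
proof -
  have "(\<integral>\<^sup>+ t. h t * ennreal (exp (d * t - d\<^sup>2 / 2)) \<partial>std_normal_measure)
      = (\<integral>\<^sup>+ t. ennreal (std_normal_density t) * (h t * ennreal (exp (d * t - d\<^sup>2 / 2))) \<partial>lborel)"
    unfolding std_normal_measure_def by (subst nn_integral_density) auto
  also have "\<dots> = (\<integral>\<^sup>+ t. h t * ennreal (std_normal_density (t - d)) \<partial>lborel)"
    by (intro nn_integral_cong) (simp add: std_normal_density_shift[symmetric] ennreal_mult' mult_ac)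
  also have "\<dots> = (\<integral>\<^sup>+ t. ennreal (std_normal_density t) * h (t + d) \<partial>lborel)"
    using nn_integral_real_affine[where c=1 and t=d and f="\<lambda>t. h t * ennreal (std_normal_density (t - d))"]
    by (simp add: add.commute mult.commute)
  also have "\<dots> = (\<integral>\<^sup>+ t. h (t + d) \<partial>std_normal_measure)"
    unfolding std_normal_measure_def by (subst nn_integral_density) auto
  finally show ?thesis .
qed

interpretation std_normal_seq: product_prob_space "\<lambda>_::nat. std_normal_measure" UNIV
  by (simp add: product_prob_space_def product_prob_space_axioms_def product_sigma_finite_def
      prob_space_std_normal_measure prob_space_imp_sigma_finite)

abbreviation std_normal_vec :: "nat \<Rightarrow> (nat \<Rightarrow> real) measure" where
  "std_normal_vec n \<equiv> PiM {..<n} (\<lambda>_. std_normal_measure)"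

lemma prob_space_std_normal_vec: "prob_space (std_normal_vec n)"
  by (rule prob_space_PiM) (rule prob_space_std_normal_measure)

lemma measurable_component_std_normal [measurable]:
  "(\<lambda>z. z i) \<in> borel_measurable (PiM I (\<lambda>_. std_normal_measure))"
proof (cases "i \<in> I")
  case True
  then show ?thesis
    using measurable_component_singleton[of i I "\<lambda>_. std_normal_measure"]
    by (simp add: measurable_std_normal_measure)
next
  case False
  have "z i = undefined" if "z \<in> space (PiM I (\<lambda>_. std_normal_measure))" for z
    using False that by (auto simp: space_PiM PiE_def extensional_def)
  then show ?thesis by (subst measurable_cong[where g="\<lambda>_. undefined"]) auto
qed

lemma nn_integral_std_normal_vec_Suc:
  assumes "F \<in> borel_measurable (std_normal_vec (Suc n))"
  shows "(\<integral>\<^sup>+ z. F z \<partial>std_normal_vec (Suc n))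
       = (\<integral>\<^sup>+ z. \<integral>\<^sup>+ t. F (z(n := t)) \<partial>std_normal_measure \<partial>std_normal_vec n)"
proof -
  have "{..<Suc n} = insert n {..<n}" by auto
  then show ?thesis
    using std_normal_seq.product_nn_integral_insert[of "{..<n}" n F] assms by simp
qed

lemma seq_measure_prefix:
  assumes "G \<in> borel_measurable (std_normal_vec n)"
    and "\<And>z. G (restrict z {..<n}) = G z"
  shows "(\<integral>\<^sup>+ z. G z \<partial>seq_measure) = (\<integral>\<^sup>+ z. G z \<partial>std_normal_vec n)"
proof -
  have "(\<integral>\<^sup>+ z. G z \<partial>std_normal_vec n)
      = (\<integral>\<^sup>+ z. G z \<partial>distr seq_measure (std_normal_vec n) (\<lambda>z. restrict z {..<n}))"
    unfolding seq_measure_def using std_normal_seq.distr_PiM_restrict_finite[of "{..<n}"] by simp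
  also have "\<dots> = (\<integral>\<^sup>+ z. G (restrict z {..<n}) \<partial>seq_measure)"
    unfolding seq_measure_def by (rule nn_integral_distr) (auto intro: measurable_restrict_subset assms(1))
  finally show ?thesis unfolding assms(2) ..
qed

lemma prob_space_seq_measure: "prob_space seq_measure"
  unfolding seq_measure_def by (rule prob_space_PiM) (rule prob_space_std_normal_measure)

lemma sets_seq_measure: "sets seq_measure = sets seq_borel"
  unfolding seq_measure_def seq_borel_def by (rule sets_PiM_cong) (simp_all add: sets_std_normal_measure)

lemma space_seq_borel [simp]: "space seq_borel = UNIV"
  by (simp add: seq_borel_def space_PiM)

lemma measurable_seq_borelI:
  assumes "\<And>i. (\<lambda>x. F x i) \<in> borel_measurable M"
  shows "F \<in> measurable M seq_borel"
  unfolding seq_borel_def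
  using measurable_PiM_single'[of UNIV "\<lambda>i x. F x i" M "\<lambda>_. borel"] assms by simp

lemma measurable_seq_borel_component [measurable (raw)]:
  "F \<in> measurable M seq_borel \<Longrightarrow> (\<lambda>x. F x i) \<in> borel_measurable M"
  unfolding seq_borel_def by simp

lemma measurable_fun_upd_seq_borel [measurable]:
  assumes "F \<in> measurable M seq_borel" "v \<in> borel_measurable M"
  shows "(\<lambda>x. (F x)(n := v x)) \<in> measurable M seq_borel"
  by (rule measurable_seq_borelI) (use assms in auto)

section \<open>Causal Gaussian recursions\<close>

definition trunc :: "nat \<Rightarrow> (nat \<Rightarrow> real) \<Rightarrow> nat \<Rightarrow> real" where
  "trunc i y = (\<lambda>j. if j < i then y j else 0)"

definition prefix_determined :: "nat \<Rightarrow> ((nat \<Rightarrow> real) \<Rightarrow> 'b) \<Rightarrow> bool" where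
  "prefix_determined n g \<longleftrightarrow> (\<forall>y y'. (\<forall>j<n. y j = y' j) \<longrightarrow> g y = g y')"

definition causal :: "(nat \<Rightarrow> (nat \<Rightarrow> real) \<Rightarrow> real) \<Rightarrow> bool" where
  "causal m \<longleftrightarrow> (\<forall>i. prefix_determined i (m i))"

lemma prefix_determinedD: "prefix_determined n g \<Longrightarrow> (\<And>j. j < n \<Longrightarrow> y j = y' j) \<Longrightarrow> g y = g y'"
  unfolding prefix_determined_def by blast

text \<open>\<open>run m s z\<close> solves \<open>y i = m i y + s i y * z i\<close> for causal \<open>m\<close> and \<open>s\<close>; it is built as a
  growing list in the same way as \<open>obs_list\<close>, so that \<open>obs_seq\<close> is an instance of it.\<close>

fun run_list :: "(nat \<Rightarrow> (nat \<Rightarrow> real) \<Rightarrow> real) \<Rightarrow> (nat \<Rightarrow> (nat \<Rightarrow> real) \<Rightarrow> real) \<Rightarrow>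
    (nat \<Rightarrow> real) \<Rightarrow> nat \<Rightarrow> real list" where
  "run_list m s z 0 = []"
| "run_list m s z (Suc i) =
     (let h = run_list m s z i; ys = (\<lambda>j. if j < i then h ! j else 0)
      in h @ [m i ys + s i ys * z i])"

definition run :: "(nat \<Rightarrow> (nat \<Rightarrow> real) \<Rightarrow> real) \<Rightarrow> (nat \<Rightarrow> (nat \<Rightarrow> real) \<Rightarrow> real) \<Rightarrow>
    (nat \<Rightarrow> real) \<Rightarrow> nat \<Rightarrow> real" where
  "run m s z i = run_list m s z (Suc i) ! i"

lemma length_run_list [simp]: "length (run_list m s z i) = i"
  by (induction i) (simp_all add: Let_def)

lemma run_list_nth: "j < i \<Longrightarrow> run_list m s z i ! j = run m s z j"
proof (induction i)
  case (Suc i)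
  then show ?case
    by (cases "j < i") (auto simp: Let_def nth_append run_def less_Suc_eq)
qed simp

lemma run_trunc: "run m s z i = m i (trunc i (run m s z)) + s i (trunc i (run m s z)) * z i"
proof -
  have "(\<lambda>j. if j < i then run_list m s z i ! j else 0) = trunc i (run m s z)"
    by (auto simp: trunc_def run_list_nth)
  then show ?thesis by (simp add: run_def Let_def nth_append)
qed

lemma causalD: "causal m \<Longrightarrow> (\<And>j. j < i \<Longrightarrow> y j = y' j) \<Longrightarrow> m i y = m i y'"
  unfolding causal_def prefix_determined_def by blast

lemma causal_trunc: "causal m \<Longrightarrow> m i (trunc i y) = m i y"
  by (rule causalD) (auto simp: trunc_def)

lemma run_causal:
  "causal m \<Longrightarrow> causal s \<Longrightarrow> run m s z i = m i (run m s z) + s i (run m s z) * z i"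
  by (subst run_trunc) (simp add: causal_trunc)

lemma run_prefix_cong: "(\<And>j. j \<le> i \<Longrightarrow> z j = z' j) \<Longrightarrow> run m s z i = run m s z' i"
proof (induction i rule: less_induct)
  case (less i)
  have "trunc i (run m s z) = trunc i (run m s z')"
    using less by (auto simp: trunc_def)
  then show ?case using less.prems by (subst (1 2) run_trunc) simp
qed

lemma run_fun_upd_last:
  assumes "causal m" "causal s" "j \<le> n"
  shows "run m s (z(n := t)) j = ((run m s z)(n := m n (run m s z) + s n (run m s z) * t)) j"
proof (cases "j < n")
  case True
  then show ?thesis by (auto intro: run_prefix_cong)
next
  case False
  have "m n (run m s (z(n := t))) = m n (run m s z)" "s n (run m s (z(n := t))) = s n (run m s z)"
    by (auto intro!: causalD[OF assms(1)] causalD[OF assms(2)] run_prefix_cong)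
  then show ?thesis using False assms(3) by (subst run_causal[OF assms(1,2)]) simp
qed

lemma measurable_run:
  fixes m s :: "'w \<Rightarrow> nat \<Rightarrow> (nat \<Rightarrow> real) \<Rightarrow> real"
  assumes m: "\<And>i. (\<lambda>(w, y). m w i y) \<in> borel_measurable (W \<Otimes>\<^sub>M seq_borel)"
    and s: "\<And>i. (\<lambda>(w, y). s w i y) \<in> borel_measurable (W \<Otimes>\<^sub>M seq_borel)"
    and z: "\<And>i. (\<lambda>z. z i) \<in> borel_measurable Z"
  shows "(\<lambda>(w, z). run (m w) (s w) z) \<in> measurable (W \<Otimes>\<^sub>M Z) seq_borel"
proof -
  have "(\<lambda>p. run (m (fst p)) (s (fst p)) (snd p) i) \<in> borel_measurable (W \<Otimes>\<^sub>M Z)" for i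
  proof (induction i rule: less_induct)
    case (less i)
    have "(\<lambda>p. trunc i (run (m (fst p)) (s (fst p)) (snd p))) \<in> measurable (W \<Otimes>\<^sub>M Z) seq_borel"
    proof (rule measurable_seq_borelI)
      fix j
      show "(\<lambda>p. trunc i (run (m (fst p)) (s (fst p)) (snd p)) j) \<in> borel_measurable (W \<Otimes>\<^sub>M Z)"
        using less[of j] by (cases "j < i") (simp_all add: trunc_def)
    qed
    then have prefix: "(\<lambda>p. (fst p, trunc i (run (m (fst p)) (s (fst p)) (snd p))))
        \<in> measurable (W \<Otimes>\<^sub>M Z) (W \<Otimes>\<^sub>M seq_borel)"
      by (intro measurable_Pair) auto
    show ?case
      using measurable_comp[OF prefix m[of i]] measurable_comp[OF prefix s[of i]]
        measurable_comp[OF measurable_snd z[of i]]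
      by (subst run_trunc[abs_def]) (auto simp: comp_def split_beta' intro!: borel_measurable_add borel_measurable_times)
  qed
  then show ?thesis
    by (intro measurable_seq_borelI) (simp add: split_beta')
qed

lemma measurable_run_fixed:
  assumes "\<And>i. m i \<in> borel_measurable seq_borel" "\<And>i. s i \<in> borel_measurable seq_borel"
    and "\<And>i. (\<lambda>z. z i) \<in> borel_measurable Z"
  shows "run m s \<in> measurable Z seq_borel"
proof -
  have "(\<lambda>(_, z). run m s z) \<in> measurable (count_space (UNIV :: unit set) \<Otimes>\<^sub>M Z) seq_borel"
    using measurable_run[of "\<lambda>_. m" _ "\<lambda>_. s" Z] assms
    by (simp add: measurable_compose[OF measurable_snd] split_beta')
  from measurable_Pair2[OF this, of "()"] show ?thesis by simp
qed

section \<open>Change of measure\<close>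

definition drift_ratio ::
  "(nat \<Rightarrow> (nat \<Rightarrow> real) \<Rightarrow> real) \<Rightarrow> (nat \<Rightarrow> (nat \<Rightarrow> real) \<Rightarrow> real) \<Rightarrow>
   (nat \<Rightarrow> (nat \<Rightarrow> real) \<Rightarrow> real) \<Rightarrow> nat \<Rightarrow> (nat \<Rightarrow> real) \<Rightarrow> real" where
  "drift_ratio ma mb s i z = (ma i (run mb s z) - mb i (run mb s z)) / s i (run mb s z)"

text \<open>The density of the first \<open>n\<close> values of \<open>run ma s\<close> with respect to those of \<open>run mb s\<close>,
  expressed in the noise \<open>z\<close> that drives \<open>run mb s\<close>.\<close>

definition likelihood_ratio ::
  "(nat \<Rightarrow> (nat \<Rightarrow> real) \<Rightarrow> real) \<Rightarrow> (nat \<Rightarrow> (nat \<Rightarrow> real) \<Rightarrow> real) \<Rightarrow>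
   (nat \<Rightarrow> (nat \<Rightarrow> real) \<Rightarrow> real) \<Rightarrow> nat \<Rightarrow> (nat \<Rightarrow> real) \<Rightarrow> real" where
  "likelihood_ratio ma mb s n z =
     exp (\<Sum>i<n. drift_ratio ma mb s i z * z i - (drift_ratio ma mb s i z)\<^sup>2 / 2)"

lemma likelihood_ratio_pos: "likelihood_ratio ma mb s n z > 0"
  by (simp add: likelihood_ratio_def)

locale causal_gaussian_pair =
  fixes ma mb s :: "nat \<Rightarrow> (nat \<Rightarrow> real) \<Rightarrow> real"
  assumes causal_ma: "causal ma" and causal_mb: "causal mb" and causal_s: "causal s"
    and s_pos: "\<And>i y. s i y > 0"
    and measurable_ma [measurable]: "\<And>i. ma i \<in> borel_measurable seq_borel"
    and measurable_mb [measurable]: "\<And>i. mb i \<in> borel_measurable seq_borel"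
    and measurable_s [measurable]: "\<And>i. s i \<in> borel_measurable seq_borel"
begin

lemma measurable_run_ma [measurable]: "run ma s \<in> measurable (std_normal_vec k) seq_borel"
  by (rule measurable_run_fixed) auto

lemma measurable_run_mb [measurable]: "run mb s \<in> measurable (std_normal_vec k) seq_borel"
  by (rule measurable_run_fixed) auto

lemma measurable_likelihood_ratio [measurable]:
  "likelihood_ratio ma mb s n \<in> borel_measurable (std_normal_vec k)"
  unfolding likelihood_ratio_def[abs_def] drift_ratio_def by measurable

lemma drift_ratio_fun_upd: "i \<le> n \<Longrightarrow> drift_ratio ma mb s i (z(n := t)) = drift_ratio ma mb s i z"
proof -
  assume "i \<le> n"
  then have "\<And>j. j < i \<Longrightarrow> run mb s (z(n := t)) j = run mb s z j"
    by (auto intro: run_prefix_cong)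
  then show ?thesis
    unfolding drift_ratio_def
    using causalD[OF causal_ma] causalD[OF causal_mb] causalD[OF causal_s] by metis
qed

lemma likelihood_ratio_Suc_fun_upd:
  assumes "d = drift_ratio ma mb s n z"
  shows "likelihood_ratio ma mb s (Suc n) (z(n := t)) = likelihood_ratio ma mb s n z * exp (d * t - d\<^sup>2 / 2)"
proof -
  have "(\<Sum>i<n. drift_ratio ma mb s i (z(n := t)) * (z(n := t)) i - (drift_ratio ma mb s i (z(n := t)))\<^sup>2 / 2)
      = (\<Sum>i<n. drift_ratio ma mb s i z * z i - (drift_ratio ma mb s i z)\<^sup>2 / 2)"
    by (intro sum.cong) (auto simp: drift_ratio_fun_upd)
  then show ?thesis
    unfolding likelihood_ratio_def assms by (simp add: drift_ratio_fun_upd exp_add)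
qed

text \<open>Integrating out the \<open>n\<close>-th observation of \<open>run ma s\<close> given the earlier ones.\<close>

definition step_integral :: "((nat \<Rightarrow> real) \<Rightarrow> ennreal) \<Rightarrow> nat \<Rightarrow> (nat \<Rightarrow> real) \<Rightarrow> ennreal" where
  "step_integral g n y = (\<integral>\<^sup>+ t. g (y(n := ma n y + s n y * t)) \<partial>std_normal_measure)"

lemma measurable_step_integral [measurable]:
  assumes [measurable]: "g \<in> borel_measurable seq_borel"
  shows "step_integral g n \<in> borel_measurable seq_borel"
proof -
  have "(\<lambda>p. g ((fst p)(n := ma n (fst p) + s n (fst p) * snd p)))
      \<in> borel_measurable (seq_borel \<Otimes>\<^sub>M std_normal_measure)"
    by measurable
  then show ?thesis
    unfolding step_integral_def[abs_def]
    using sigma_finite_measure.borel_measurable_nn_integral_fst[OF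
        prob_space_imp_sigma_finite[OF prob_space_std_normal_measure]]
    by simp
qed

lemma prefix_determined_step_integral:
  assumes "prefix_determined (Suc n) g"
  shows "prefix_determined n (step_integral g n)"
  unfolding prefix_determined_def
proof (intro allI impI)
  fix y y' :: "nat \<Rightarrow> real" assume "\<forall>j<n. y j = y' j"
  moreover from this have "ma n y = ma n y'" "s n y = s n y'"
    by (auto intro: causalD[OF causal_ma] causalD[OF causal_s])
  ultimately show "step_integral g n y = step_integral g n y'"
    unfolding step_integral_def
    by (auto intro!: nn_integral_cong prefix_determinedD[OF assms] simp: less_Suc_eq)
qed

lemma nn_integral_run_ma_Suc:
  assumes [measurable]: "g \<in> borel_measurable seq_borel" and g: "prefix_determined (Suc n) g"
  shows "(\<integral>\<^sup>+ z. g (run ma s z) \<partial>std_normal_vec (Suc n))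
       = (\<integral>\<^sup>+ z. step_integral g n (run ma s z) \<partial>std_normal_vec n)"
proof -
  have "g (run ma s (z(n := t))) = g ((run ma s z)(n := ma n (run ma s z) + s n (run ma s z) * t))" for z t
    by (rule prefix_determinedD[OF g]) (simp add: run_fun_upd_last causal_ma causal_s)
  then show ?thesis
    by (subst nn_integral_std_normal_vec_Suc) (simp_all add: step_integral_def)
qed

lemma nn_integral_run_mb_likelihood_Suc:
  assumes [measurable]: "g \<in> borel_measurable seq_borel" and g: "prefix_determined (Suc n) g"
  shows "(\<integral>\<^sup>+ z. g (run mb s z) * ennreal (likelihood_ratio ma mb s (Suc n) z) \<partial>std_normal_vec (Suc n))
       = (\<integral>\<^sup>+ z. step_integral g n (run mb s z) * ennreal (likelihood_ratio ma mb s n z) \<partial>std_normal_vec n)"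
proof -
  have "(\<integral>\<^sup>+ t. g (run mb s (z(n := t))) * ennreal (likelihood_ratio ma mb s (Suc n) (z(n := t))) \<partial>std_normal_measure)
      = step_integral g n (run mb s z) * ennreal (likelihood_ratio ma mb s n z)" for z
  proof -
    define y where "y = run mb s z"
    define d where "d = drift_ratio ma mb s n z"
    have g_upd: "g (run mb s (z(n := t))) = g (y(n := mb n y + s n y * t))" for t
      unfolding y_def
      by (rule prefix_determinedD[OF g]) (simp add: run_fun_upd_last causal_mb causal_s)
    have shift: "mb n y + s n y * (t + d) = ma n y + s n y * t" for t
      using s_pos[of n y] by (simp add: d_def drift_ratio_def y_def field_simps)
    have "(\<integral>\<^sup>+ t. g (run mb s (z(n := t))) * ennreal (likelihood_ratio ma mb s (Suc n) (z(n := t))) \<partial>std_normal_measure)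
        = (\<integral>\<^sup>+ t. ennreal (likelihood_ratio ma mb s n z) *
             (g (y(n := mb n y + s n y * t)) * ennreal (exp (d * t - d\<^sup>2 / 2))) \<partial>std_normal_measure)"
      by (intro nn_integral_cong) (simp add: g_upd likelihood_ratio_Suc_fun_upd[OF d_def]
          ennreal_mult less_imp_le[OF likelihood_ratio_pos] mult_ac)
    also have "\<dots> = ennreal (likelihood_ratio ma mb s n z) *
        (\<integral>\<^sup>+ t. g (y(n := mb n y + s n y * t)) * ennreal (exp (d * t - d\<^sup>2 / 2)) \<partial>std_normal_measure)"
      by (rule nn_integral_cmult) (unfold measurable_std_normal_measure, measurable)
    also have "(\<integral>\<^sup>+ t. g (y(n := mb n y + s n y * t)) * ennreal (exp (d * t - d\<^sup>2 / 2)) \<partial>std_normal_measure)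
        = step_integral g n y"
      by (subst nn_integral_std_normal_tilt) (simp_all add: shift step_integral_def)
    finally show ?thesis unfolding y_def by (simp only: mult.commute)
  qed
  then show ?thesis
    by (subst nn_integral_std_normal_vec_Suc) simp_all
qed

theorem nn_integral_run_change_of_measure:
  assumes "g \<in> borel_measurable seq_borel" and "prefix_determined n g"
  shows "(\<integral>\<^sup>+ z. g (run ma s z) \<partial>std_normal_vec n)
       = (\<integral>\<^sup>+ z. g (run mb s z) * ennreal (likelihood_ratio ma mb s n z) \<partial>std_normal_vec n)"
  using assms
proof (induction n arbitrary: g)
  case 0
  then have "g (run ma s z) = g (run mb s z)" for z
    by (auto intro: prefix_determinedD)
  then show ?case by (simp add: likelihood_ratio_def)
next
  case (Suc n)
  then show ?case
    by (simp add: nn_integral_run_ma_Suc nn_integral_run_mb_likelihood_Suc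
        Suc.IH prefix_determined_step_integral)
qed

lemma nn_integral_likelihood_ratio: "(\<integral>\<^sup>+ z. ennreal (likelihood_ratio ma mb s n z) \<partial>std_normal_vec n) = 1"
  using nn_integral_run_change_of_measure[of "\<lambda>_. 1" n]
    prob_space.emeasure_space_1[OF prob_space_std_normal_vec]
  by (simp add: prefix_determined_def)

end

section \<open>Two-point lower bound\<close>

lemma two_mul_sqrt_le_min_add:
  fixes L e :: real
  assumes "0 \<le> L"
  shows "2 * e * sqrt L \<le> min L 1 + e\<^sup>2 * (1 + L)"
proof -
  have sq: "(sqrt L)\<^sup>2 = L" using assms by simp
  have "0 \<le> (sqrt L - e)\<^sup>2" "0 \<le> (e * sqrt L - 1)\<^sup>2" by simp_all
  then have "2 * e * sqrt L \<le> L + e\<^sup>2" "2 * e * sqrt L \<le> 1 + e\<^sup>2 * L"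
    unfolding power2_diff power_mult_distrib sq by (simp_all add: algebra_simps)
  moreover have "0 \<le> e\<^sup>2" "0 \<le> e\<^sup>2 * L" "e\<^sup>2 * (1 + L) = e\<^sup>2 + e\<^sup>2 * L"
    using assms by (simp_all add: algebra_simps)
  ultimately show ?thesis by (simp only: min_def split: if_split) (intro conjI impI; linarith)
qed

lemma two_point_pointwise:
  fixes a b \<Delta> L e :: real
  assumes "0 \<le> a" "0 \<le> b" "\<Delta> \<le> a + b" "0 \<le> \<Delta>" "0 \<le> L"
  shows "2 * e * \<Delta> * sqrt L \<le> a * L + b + \<Delta> * e\<^sup>2 * (1 + L)"
proof -
  have "min L 1 * \<Delta> \<le> min L 1 * (a + b)"
    using assms by (intro mult_left_mono) auto
  also have "\<dots> \<le> a * L + b"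
    using assms mult_left_le[of L b] mult_right_mono[of 1 L a]
    by (cases "L \<le> 1") (simp_all add: min_def algebra_simps)
  finally have "min L 1 * \<Delta> \<le> a * L + b" .
  moreover have "\<Delta> * (2 * e * sqrt L) \<le> \<Delta> * (min L 1 + e\<^sup>2 * (1 + L))"
    using assms by (intro mult_left_mono two_mul_sqrt_le_min_add) auto
  ultimately show ?thesis by (simp add: algebra_simps)
qed

context causal_gaussian_pair
begin

definition mid :: "nat \<Rightarrow> (nat \<Rightarrow> real) \<Rightarrow> real" where
  "mid i y = (ma i y + mb i y) / 2"

lemma causal_gaussian_pair_mid: "causal_gaussian_pair mid mb s"
proof
  show "causal mid"
    using causal_ma causal_mb unfolding causal_def prefix_determined_def mid_def by metis
qed (auto simp: causal_mb causal_s s_pos mid_def[abs_def])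

lemma sqrt_likelihood_ratio:
  "sqrt (likelihood_ratio ma mb s n z)
     = likelihood_ratio mid mb s n z * exp (- (\<Sum>i<n. (drift_ratio ma mb s i z)\<^sup>2) / 8)"
proof -
  have mid: "drift_ratio mid mb s i z = drift_ratio ma mb s i z / 2" for i
    unfolding drift_ratio_def mid_def by (simp add: field_simps)
  have halve: "(\<Sum>i<n. drift_ratio ma mb s i z * z i - (drift_ratio ma mb s i z)\<^sup>2 / 2) / 2
      = (\<Sum>i<n. drift_ratio mid mb s i z * z i - (drift_ratio mid mb s i z)\<^sup>2 / 2)
        - (\<Sum>i<n. (drift_ratio ma mb s i z)\<^sup>2) / 8"
    unfolding sum_divide_distrib sum_subtractf[symmetric]
    by (intro sum.cong) (simp_all add: mid power_divide field_simps)
  have sqrt_exp: "sqrt (exp x) = exp (x / 2)" for x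
    by (rule real_sqrt_unique) (simp_all add: power2_eq_square exp_add[symmetric])
  show ?thesis
    unfolding likelihood_ratio_def sqrt_exp halve exp_add[symmetric] by simp
qed

lemma nn_integral_sqrt_likelihood_ratio_ge:
  assumes "\<And>z. (\<Sum>i<n. (drift_ratio ma mb s i z)\<^sup>2) \<le> K"
  shows "ennreal (exp (- K / 8)) \<le> (\<integral>\<^sup>+ z. ennreal (sqrt (likelihood_ratio ma mb s n z)) \<partial>std_normal_vec n)"
proof -
  interpret mid: causal_gaussian_pair mid mb s by (rule causal_gaussian_pair_mid)
  have "ennreal (exp (- K / 8))
      = ennreal (exp (- K / 8)) * (\<integral>\<^sup>+ z. ennreal (likelihood_ratio mid mb s n z) \<partial>std_normal_vec n)"
    by (simp add: mid.nn_integral_likelihood_ratio)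
  also have "\<dots> = (\<integral>\<^sup>+ z. ennreal (exp (- K / 8) * likelihood_ratio mid mb s n z) \<partial>std_normal_vec n)"
    by (subst nn_integral_cmult[symmetric]) (simp_all add: ennreal_mult')
  also have "\<dots> \<le> (\<integral>\<^sup>+ z. ennreal (sqrt (likelihood_ratio ma mb s n z)) \<partial>std_normal_vec n)"
    using assms likelihood_ratio_pos
    by (intro nn_integral_mono ennreal_leI) (simp add: sqrt_likelihood_ratio mult.commute)
  finally show ?thesis .
qed

lemma nn_integral_two_point_ge:
  fixes Ra Rb :: "(nat \<Rightarrow> real) \<Rightarrow> real"
  assumes [measurable]: "Ra \<in> borel_measurable seq_borel" "Rb \<in> borel_measurable seq_borel"
    and Ra_nonneg: "\<And>y. 0 \<le> Ra y" and Rb_nonneg: "\<And>y. 0 \<le> Rb y"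
    and Ra_Rb: "\<And>y. \<Delta> \<le> Ra y + Rb y" and \<Delta>_nonneg: "0 \<le> \<Delta>"
    and Ra_prefix: "prefix_determined n Ra"
    and drift: "\<And>z. (\<Sum>i<n. (drift_ratio ma mb s i z)\<^sup>2) \<le> K"
    and e_nonneg: "0 \<le> e"
  shows "ennreal (2 * e * \<Delta> * exp (- K / 8))
       \<le> (\<integral>\<^sup>+ z. ennreal (Ra (run ma s z)) \<partial>std_normal_vec n) + (\<integral>\<^sup>+ z. ennreal (Rb (run mb s z)) \<partial>std_normal_vec n)
         + ennreal (2 * (\<Delta> * e\<^sup>2))"
proof -
  define L where "L = likelihood_ratio ma mb s n"
  have L_nonneg: "0 \<le> L z" for z unfolding L_def by (rule less_imp_le[OF likelihood_ratio_pos])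
  have c_nonneg: "0 \<le> \<Delta> * e\<^sup>2" using \<Delta>_nonneg by simp
  have Ea: "(\<integral>\<^sup>+ z. ennreal (Ra (run ma s z)) \<partial>std_normal_vec n)
      = (\<integral>\<^sup>+ z. ennreal (Ra (run mb s z) * L z) \<partial>std_normal_vec n)"
    using nn_integral_run_change_of_measure[of "\<lambda>y. ennreal (Ra y)" n] Ra_prefix Ra_nonneg
    by (simp add: prefix_determined_def L_def ennreal_mult')
  have "ennreal (2 * e * \<Delta> * exp (- K / 8))
      \<le> ennreal (2 * e * \<Delta>) * (\<integral>\<^sup>+ z. ennreal (sqrt (L z)) \<partial>std_normal_vec n)"
    using nn_integral_sqrt_likelihood_ratio_ge[OF drift] \<Delta>_nonneg e_nonneg
    by (simp add: L_def ennreal_mult mult_left_mono)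
  also have "\<dots> = (\<integral>\<^sup>+ z. ennreal (2 * e * \<Delta> * sqrt (L z)) \<partial>std_normal_vec n)"
    by (subst nn_integral_cmult[symmetric]) (simp_all add: L_def ennreal_mult' \<Delta>_nonneg e_nonneg)
  also have "\<dots> \<le> (\<integral>\<^sup>+ z. ennreal (Ra (run mb s z) * L z) + ennreal (Rb (run mb s z))
                      + ennreal (\<Delta> * e\<^sup>2) + ennreal (\<Delta> * e\<^sup>2) * ennreal (L z) \<partial>std_normal_vec n)"
  proof (intro nn_integral_mono)
    fix z
    have "2 * e * \<Delta> * sqrt (L z) \<le> Ra (run mb s z) * L z + Rb (run mb s z) + \<Delta> * e\<^sup>2 + \<Delta> * e\<^sup>2 * L z"
      using two_point_pointwise[OF Ra_nonneg Rb_nonneg Ra_Rb[of "run mb s z"] \<Delta>_nonneg L_nonneg[of z], of e]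
      by (simp add: algebra_simps)
    then show "ennreal (2 * e * \<Delta> * sqrt (L z)) \<le> ennreal (Ra (run mb s z) * L z)
        + ennreal (Rb (run mb s z)) + ennreal (\<Delta> * e\<^sup>2) + ennreal (\<Delta> * e\<^sup>2) * ennreal (L z)"
      using Ra_nonneg Rb_nonneg L_nonneg c_nonneg
      by (simp add: ennreal_plus[symmetric] ennreal_mult[symmetric] ennreal_leI del: ennreal_plus)
  qed
  also have "\<dots> = (\<integral>\<^sup>+ z. ennreal (Ra (run ma s z)) \<partial>std_normal_vec n)
      + (\<integral>\<^sup>+ z. ennreal (Rb (run mb s z)) \<partial>std_normal_vec n) + ennreal (2 * (\<Delta> * e\<^sup>2))"
    using prob_space.emeasure_space_1[OF prob_space_std_normal_vec] c_nonneg
    by (simp add: nn_integral_add nn_integral_cmult Ea L_def nn_integral_likelihood_ratio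
        ennreal_plus[symmetric] add.assoc del: ennreal_plus)
  finally show ?thesis .
qed

text \<open>Le Cam's two-point method: \<open>Ra\<close> is small only where \<open>run ma s\<close> is likely and \<open>Rb\<close> only
  where \<open>run mb s\<close> is, and the overlap of the two laws is bounded below through their Hellinger
  affinity \<open>\<integral> sqrt (likelihood_ratio ma mb s n) \<ge> exp (- K / 8)\<close>.\<close>

theorem two_point_lower_bound:
  fixes Ra Rb :: "(nat \<Rightarrow> real) \<Rightarrow> real"
  assumes "Ra \<in> borel_measurable seq_borel" "Rb \<in> borel_measurable seq_borel"
    and "\<And>y. 0 \<le> Ra y" "\<And>y. 0 \<le> Rb y" "\<And>y. \<Delta> \<le> Ra y + Rb y" "0 \<le> \<Delta>"
    and "prefix_determined n Ra"
    and "\<And>z. (\<Sum>i<n. (drift_ratio ma mb s i z)\<^sup>2) \<le> K"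
  shows "ennreal (\<Delta> * exp (- K / 4) / 2)
       \<le> (\<integral>\<^sup>+ z. ennreal (Ra (run ma s z)) \<partial>std_normal_vec n) + (\<integral>\<^sup>+ z. ennreal (Rb (run mb s z)) \<partial>std_normal_vec n)"
proof -
  define e where "e = exp (- K / 8) / 2"
  have "ennreal (2 * e * \<Delta> * exp (- K / 8)) - ennreal (2 * (\<Delta> * e\<^sup>2))
      \<le> (\<integral>\<^sup>+ z. ennreal (Ra (run ma s z)) \<partial>std_normal_vec n) + (\<integral>\<^sup>+ z. ennreal (Rb (run mb s z)) \<partial>std_normal_vec n)"
    using nn_integral_two_point_ge[OF assms, of e] by (simp add: e_def ennreal_minus_le_iff add.commute)
  moreover have "0 \<le> 2 * (\<Delta> * e\<^sup>2)" using assms(6) by simp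
  moreover have "2 * e * \<Delta> * exp (- K / 8) - 2 * (\<Delta> * e\<^sup>2) = \<Delta> * exp (- K / 4) / 2"
  proof -
    have "exp (- K / 8) * exp (- K / 8) = exp (- K / 4)" by (simp add: exp_add[symmetric])
    then show ?thesis unfolding e_def by (simp add: power2_eq_square field_simps)
  qed
  ultimately show ?thesis by (simp only: ennreal_minus)
qed

end

section \<open>Counting queries per step\<close>

lemma card_less_Suc_filter:
  "card {i. i < Suc n \<and> P i} = card {i. i < n \<and> P i} + (if P n then 1 else 0)"
proof -
  have "{i. i < Suc n \<and> P i} = {i. i < n \<and> P i} \<union> (if P n then {n} else {})"
    by (auto simp: less_Suc_eq)
  then show ?thesis by (simp add: card_Un_disjoint)
qed

lemma real_card_filter_eq_sum:
  fixes i :: nat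
  shows "real (card {j. j < i \<and> P j}) = (\<Sum>j<i. if P j then 1 else 0)"
  by (induction i) (simp_all add: card_less_Suc_filter)

lemma card_filter_rank_less:
  fixes n :: nat
  shows "card {i. i < n \<and> P i \<and> card {j. j < i \<and> P j} < T} = min (card {i. i < n \<and> P i}) T"
  by (induction n) (auto simp: card_less_Suc_filter[where P="\<lambda>i. P i \<and> card {j. j < i \<and> P j} < T"]
      card_less_Suc_filter[where P=P])

lemma card_filter_not_add: "card {i. i < n \<and> \<not> P i} + card {i. i < n \<and> P i} = n"
proof -
  have "{i. i < n \<and> \<not> P i} \<union> {i. i < n \<and> P i} = {..<n}" by auto
  then show ?thesis by (subst card_Un_disjoint[symmetric]) auto
qed

lemma card_rank_eq_le:
  assumes "T \<le> card {i. i < T + C \<and> P i}"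
  shows "card {i. i < T + C \<and> card {j. j < i \<and> P j} = v} \<le> C + 1"
proof -
  define F where "F = {i. i < T + C \<and> card {j. j < i \<and> P j} = v}"
  have rank_less: "card {j. j < i \<and> P j} < card {j. j < i' \<and> P j}" if "i < i'" "P i" for i i'
  proof -
    have "card (insert i {j. j < i \<and> P j}) \<le> card {j. j < i' \<and> P j}"
      using that by (intro card_mono) auto
    then show ?thesis by simp
  qed
  have "card (F \<inter> {i. P i}) \<le> Suc 0"
  proof (subst card_le_Suc0_iff_eq, simp add: F_def, intro ballI)
    fix i i' assume "i \<in> F \<inter> {i. P i}" "i' \<in> F \<inter> {i. P i}"
    then show "i = i'"
      using rank_less[of i i'] rank_less[of i' i] unfolding F_def by (cases i i' rule: linorder_cases) auto
  qed
  moreover have "card (F - {i. P i}) \<le> C"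
  proof -
    have "card (F - {i. P i}) \<le> card {i. i < T + C \<and> \<not> P i}"
      unfolding F_def by (intro card_mono) auto
    then show ?thesis using card_filter_not_add[of "T + C" P] assms by linarith
  qed
  moreover have "card F \<le> card (F \<inter> {i. P i}) + card (F - {i. P i})"
    using card_Un_le[of "F \<inter> {i. P i}" "F - {i. P i}"] by (simp add: Int_Diff_Un)
  ultimately show ?thesis unfolding F_def by linarith
qed

text \<open>Ranks \<open>v \<ge> T\<close> are sent to \<open>u 0\<close> by the truncated subtraction \<open>T - Suc v\<close>; at most \<open>C\<close>
  such values occur.\<close>

lemma sum_weight_rank_le:
  fixes u :: "nat \<Rightarrow> real"
  assumes "T \<le> card {i. i < T + C \<and> P i}" and u_nonneg: "\<And>k. 0 \<le> u k" and "summable u"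
  shows "(\<Sum>i<T + C. u (T - Suc (card {j. j < i \<and> P j}))) \<le> (real C + 1) * (suminf u + real C * u 0)"
proof -
  define rank where "rank i = card {j. j < i \<and> P j}" for i
  define g where "g v = u (T - Suc v)" for v
  have rank_less: "rank i < T + C" if "i < T + C" for i
  proof -
    have "rank i \<le> card {..<i}" unfolding rank_def by (rule card_mono) auto
    then show ?thesis using that by simp
  qed
  have "(\<Sum>i<T + C. g (rank i)) = (\<Sum>v\<in>rank ` {..<T + C}. real (card {i\<in>{..<T + C}. rank i = v}) * g v)"
    by (subst sum.image_gen[where g=rank]) simp_all
  also have "\<dots> \<le> (\<Sum>v\<in>rank ` {..<T + C}. (real C + 1) * g v)"
  proof (intro sum_mono mult_right_mono)
    fix v
    have "{i\<in>{..<T + C}. rank i = v} = {i. i < T + C \<and> card {j. j < i \<and> P j} = v}"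
      unfolding rank_def by auto
    then show "real (card {i\<in>{..<T + C}. rank i = v}) \<le> real C + 1"
      using card_rank_eq_le[OF assms(1), of v] by simp
  qed (simp add: g_def u_nonneg)
  also have "\<dots> \<le> (\<Sum>v<T + C. (real C + 1) * g v)"
    by (rule sum_mono2) (auto intro: rank_less simp: g_def u_nonneg)
  also have "\<dots> = (real C + 1) * (\<Sum>v<T + C. g v)"
    by (simp add: sum_distrib_left)
  also have "(\<Sum>v<T + C. g v) = (\<Sum>v<T. g v) + (\<Sum>v\<in>{T..<T + C}. g v)"
    by (simp add: sum.atLeastLessThan_concat[symmetric] lessThan_atLeast0 del: sum.op_ivl_Suc)
  also have "(\<Sum>v<T. g v) = (\<Sum>v<T. u v)"
    unfolding g_def by (rule sum.nat_diff_reindex)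
  also have "(\<Sum>v\<in>{T..<T + C}. g v) = real C * u 0"
    unfolding g_def by simp
  also have "(\<Sum>v<T. u v) \<le> suminf u"
    using assms(3) u_nonneg by (intro sum_le_suminf) auto
  finally show ?thesis unfolding g_def rank_def by (simp add: mult_left_mono)
qed

lemma summable_inverse_one_plus_powr:
  assumes "\<alpha> > 1"
  shows "summable (\<lambda>k::nat. 1 / (1 + real k powr \<alpha>))"
proof (rule summable_comparison_test_ev)
  show "summable (\<lambda>k::nat. real k powr (- \<alpha>))"
    using assms by (subst summable_real_powr_iff) simp
  show "\<forall>\<^sub>F k in sequentially. norm (1 / (1 + real k powr \<alpha>)) \<le> real k powr (- \<alpha>)"
    using eventually_gt_at_top[of "0::nat"]
    by eventually_elim (simp add: powr_minus divide_inverse le_imp_inverse_le)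
qed

section \<open>Gaussian bumps\<close>

lemma rkhs_ball_kfun_single:
  assumes "c \<in> D" "0 \<le> B" "a\<^sup>2 * k c c \<le> B\<^sup>2"
  shows "rkhs_ball k D B (kfun k [(a, c)])"
  unfolding rkhs_ball_def
proof (intro exI[of _ "\<lambda>_. [(a, c)]"] conjI allI impI ballI exI[of _ "sqrt (knorm2 k [(a, c)])"])
  show "sqrt (knorm2 k [(a, c)]) \<le> B"
    using assms(2,3) real_sqrt_le_mono[of "a\<^sup>2 * k c c" "B\<^sup>2"]
    by (simp add: knorm2_def power2_eq_square)
qed (use assms(1) in \<open>simp_all add: knorm2_def kneg_def\<close>)

definition gauss_bump :: "real \<Rightarrow> real \<Rightarrow> 'a::real_normed_vector \<Rightarrow> 'a \<Rightarrow> real" where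
  "gauss_bump \<beta> l c x = \<beta> * exp (- (norm (x - c))\<^sup>2 / (2 * l\<^sup>2))"

lemma kfun_se_kernel_single: "Mk \<noteq> 0 \<Longrightarrow> kfun (se_kernel Mk l) [(B / Mk, c)] = gauss_bump (B * Mk) l c"
  by (auto simp: kfun_def se_kernel_def gauss_bump_def power2_eq_square)

lemma rkhs_ball_se_kernel_bump:
  assumes "c \<in> D" "0 < Mk" "0 \<le> B"
  shows "rkhs_ball (se_kernel Mk l) D B (gauss_bump (B * Mk) l c)"
  using rkhs_ball_kfun_single[of c D B "B / Mk" "se_kernel Mk l"] assms
  by (simp add: kfun_se_kernel_single se_kernel_def power_divide)

lemma measurable_gauss_bump [measurable]:
  fixes c :: "'a::{real_normed_vector, second_countable_topology}"
  shows "gauss_bump \<beta> l c \<in> borel_measurable borel"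
  unfolding gauss_bump_def[abs_def] by measurable

lemma gauss_bump_nonneg: "0 \<le> \<beta> \<Longrightarrow> 0 \<le> gauss_bump \<beta> l c x"
  by (simp add: gauss_bump_def)

lemma gauss_bump_le: "0 \<le> \<beta> \<Longrightarrow> gauss_bump \<beta> l c x \<le> \<beta>"
  by (simp add: gauss_bump_def divide_nonneg_nonneg mult_left_le)

lemma SUP_gauss_bump: "c \<in> D \<Longrightarrow> 0 \<le> \<beta> \<Longrightarrow> (SUP x\<in>D. gauss_bump \<beta> l c x) = \<beta>"
  by (rule cSup_eq_maximum) (auto simp: gauss_bump_le intro!: image_eqI[of _ _ c], simp add: gauss_bump_def)

definition bump_gap :: "real \<Rightarrow> real \<Rightarrow> 'a::real_normed_vector \<Rightarrow> 'a \<Rightarrow> real" where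
  "bump_gap \<beta> l a b = \<beta> * (1 - exp (- (norm (a - b))\<^sup>2 / (8 * l\<^sup>2)))"

lemma bump_gap_pos: "0 < \<beta> \<Longrightarrow> l \<noteq> 0 \<Longrightarrow> a \<noteq> b \<Longrightarrow> 0 < bump_gap \<beta> l a b"
  by (simp add: bump_gap_def)

text \<open>Any point is at distance at least \<open>norm (a - b) / 2\<close> from \<open>a\<close> or from \<open>b\<close>.\<close>

lemma bump_gap_le_regret:
  fixes a b x :: "'a::real_normed_vector"
  assumes "0 \<le> \<beta>" "l \<noteq> 0"
  shows "bump_gap \<beta> l a b \<le> (\<beta> - gauss_bump \<beta> l a x) + (\<beta> - gauss_bump \<beta> l b x)"
proof -
  have far: "gauss_bump \<beta> l c x \<le> \<beta> * exp (- (norm (a - b))\<^sup>2 / (8 * l\<^sup>2))"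
    if "norm (a - b) \<le> 2 * norm (x - c)" for c
  proof -
    have "(norm (a - b))\<^sup>2 \<le> (2 * norm (x - c))\<^sup>2"
      using that by (intro power_mono) auto
    then have "(norm (a - b))\<^sup>2 / (8 * l\<^sup>2) \<le> (norm (x - c))\<^sup>2 / (2 * l\<^sup>2)"
      using assms(2) by (simp add: power_mult_distrib field_simps)
    then show ?thesis
      unfolding gauss_bump_def using assms(1) by (intro mult_left_mono) auto
  qed
  have "norm (a - b) \<le> norm (x - a) + norm (x - b)"
    using norm_triangle_ineq4[of "x - b" "x - a"] by (simp add: norm_minus_commute)
  then consider "norm (a - b) \<le> 2 * norm (x - a)" | "norm (a - b) \<le> 2 * norm (x - b)"
    by linarith
  then show ?thesis
    using far[of a] far[of b] gauss_bump_le[OF assms(1), of l a x] gauss_bump_le[OF assms(1), of l b x]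
    by cases (auto simp: bump_gap_def algebra_simps)
qed

section \<open>The hard instance\<close>

lemma obs_seq_eq_run:
  "obs_seq f \<sigma> \<alpha> T ismain pt w =
     run (\<lambda>i ys. f (pt i w ys)) (\<lambda>i ys. \<sigma> * sqrt (1 + real (T - step_of ismain i w ys) powr \<alpha>))"
proof -
  have "obs_list f \<sigma> \<alpha> T ismain pt w z i =
      run_list (\<lambda>i ys. f (pt i w ys)) (\<lambda>i ys. \<sigma> * sqrt (1 + real (T - step_of ismain i w ys) powr \<alpha>)) z i"
    for z i by (induction i) (simp_all add: Let_def)
  then show ?thesis unfolding obs_seq_def[abs_def] run_def[abs_def] by simp
qed

text \<open>\<open>(\<beta> / \<sigma>)\<^sup>2 / (1 + k powr \<alpha>)\<close> bounds the squared drift of a query made \<open>k\<close> steps before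
  the horizon, and each \<open>k\<close> occurs for at most \<open>C + 1\<close> queries.\<close>

definition info_bound :: "real \<Rightarrow> real \<Rightarrow> real \<Rightarrow> nat \<Rightarrow> real" where
  "info_bound \<beta> \<sigma> \<alpha> C = (\<beta> / \<sigma>)\<^sup>2 * ((real C + 1) * (suminf (\<lambda>k::nat. 1 / (1 + real k powr \<alpha>)) + real C))"

locale hard_instance =
  fixes D :: "'a::{real_normed_vector, second_countable_topology} set" and a b :: 'a
    and Mk l B \<sigma> \<alpha> :: real and C T :: nat
    and ismain :: "nat \<Rightarrow> (nat \<Rightarrow> real) \<Rightarrow> (nat \<Rightarrow> real) \<Rightarrow> bool"
    and pt :: "nat \<Rightarrow> (nat \<Rightarrow> real) \<Rightarrow> (nat \<Rightarrow> real) \<Rightarrow> 'a"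
  assumes a_in_D: "a \<in> D" and b_in_D: "b \<in> D" and a_ne_b: "a \<noteq> b"
    and Mk_pos: "0 < Mk" and l_pos: "0 < l" and B_pos: "0 < B" and \<sigma>_pos: "0 < \<sigma>" and \<alpha>_gt_1: "1 < \<alpha>"
    and admissible: "admissible_alg D C T ismain pt"
begin

abbreviation \<beta> :: real where "\<beta> \<equiv> B * Mk"

abbreviation bump :: "'a \<Rightarrow> 'a \<Rightarrow> real" where "bump c \<equiv> gauss_bump \<beta> l c"

definition mean :: "'a \<Rightarrow> (nat \<Rightarrow> real) \<Rightarrow> nat \<Rightarrow> (nat \<Rightarrow> real) \<Rightarrow> real" where
  "mean c w i ys = bump c (pt i w ys)"

definition noise_scale :: "(nat \<Rightarrow> real) \<Rightarrow> nat \<Rightarrow> (nat \<Rightarrow> real) \<Rightarrow> real" where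
  "noise_scale w i ys = \<sigma> * sqrt (1 + real (T - step_of ismain i w ys) powr \<alpha>)"

definition counted :: "(nat \<Rightarrow> real) \<Rightarrow> (nat \<Rightarrow> real) \<Rightarrow> nat \<Rightarrow> bool" where
  "counted w ys i \<longleftrightarrow> ismain i w ys \<and> card {j. j < i \<and> ismain j w ys} < T"

definition realized_regret :: "'a \<Rightarrow> (nat \<Rightarrow> real) \<times> (nat \<Rightarrow> real) \<Rightarrow> real" where
  "realized_regret c p = regret D (bump c) T C ismain pt (fst p) (obs_seq (bump c) \<sigma> \<alpha> T ismain pt (fst p) (snd p))"

lemma \<beta>_pos: "0 < \<beta>"
  using B_pos Mk_pos by simp

lemma bump_gap_ab_pos: "0 < bump_gap \<beta> l a b"
  using bump_gap_pos[OF \<beta>_pos _ a_ne_b] l_pos by simp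

lemma ismain_pt_prefix_cong:
  "(\<And>j. j < i \<Longrightarrow> ys j = ys' j) \<Longrightarrow> ismain i w ys = ismain i w ys' \<and> pt i w ys = pt i w ys'"
  using admissible unfolding admissible_alg_def by blast

lemma card_main_prefix_cong:
  assumes "\<And>j. j < i \<Longrightarrow> ys j = ys' j"
  shows "{j. j < i \<and> ismain j w ys} = {j. j < i \<and> ismain j w ys'}"
  using ismain_pt_prefix_cong[of _ ys ys' w] assms by auto

lemma enough_main_queries: "T \<le> card {i. i < T + C \<and> ismain i w ys}"
  using admissible unfolding admissible_alg_def by blast

lemma measurable_pt [measurable]:
  "(\<lambda>p. pt i (fst p) (snd p)) \<in> borel_measurable (seq_borel \<Otimes>\<^sub>M seq_borel)"
  using admissible unfolding admissible_alg_def by (simp add: split_beta')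

lemma measurable_ismain [measurable]:
  "Measurable.pred (seq_borel \<Otimes>\<^sub>M seq_borel) (\<lambda>p. ismain i (fst p) (snd p))"
  using admissible pred_count_space_const1[of "\<lambda>p. ismain i (fst p) (snd p)" _ True]
  unfolding admissible_alg_def by (simp add: split_beta')

lemma noise_scale_eq_sum:
  "noise_scale w i ys = \<sigma> * sqrt (1 + (max 0 (real T - 1 - (\<Sum>j<i. if ismain j w ys then 1 else 0))) powr \<alpha>)"
proof -
  have "real (T - Suc c) = max 0 (real T - 1 - real c)" for c
    by (cases "Suc c \<le> T") (auto simp: of_nat_diff)
  then show ?thesis
    unfolding noise_scale_def step_of_def by (simp add: real_card_filter_eq_sum)
qed

lemma counted_iff_sum:
  "counted w ys i \<longleftrightarrow> ismain i w ys \<and> (\<Sum>j<i. if ismain j w ys then 1 else 0) < real T"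
  unfolding counted_def real_card_filter_eq_sum[symmetric] by simp

lemma measurable_noise_scale [measurable]:
  "(\<lambda>p. noise_scale (fst p) i (snd p)) \<in> borel_measurable (seq_borel \<Otimes>\<^sub>M seq_borel)"
  unfolding noise_scale_eq_sum by measurable

lemma measurable_counted [measurable]:
  "Measurable.pred (seq_borel \<Otimes>\<^sub>M seq_borel) (\<lambda>p. counted (fst p) (snd p) i)"
  unfolding counted_iff_sum by measurable

lemma measurable_mean [measurable]:
  "(\<lambda>p. mean c (fst p) i (snd p)) \<in> borel_measurable (seq_borel \<Otimes>\<^sub>M seq_borel)"
  unfolding mean_def by measurable

lemma measurable_fixed_fst:
  "(\<lambda>p. F (fst p) (snd p)) \<in> borel_measurable (seq_borel \<Otimes>\<^sub>M seq_borel) \<Longrightarrow> F w \<in> borel_measurable seq_borel"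
  using measurable_Pair2[of "\<lambda>p. F (fst p) (snd p)" seq_borel seq_borel _ w] by simp

lemma causal_mean: "causal (mean c w)"
  unfolding causal_def prefix_determined_def mean_def using ismain_pt_prefix_cong by metis

lemma causal_noise_scale: "causal (noise_scale w)"
  unfolding causal_def prefix_determined_def noise_scale_def step_of_def
  using card_main_prefix_cong by (metis (no_types, lifting))

lemma noise_scale_pos: "0 < noise_scale w i y"
  unfolding noise_scale_def using \<sigma>_pos by (simp add: add_pos_nonneg)

lemma causal_gaussian_pair_bumps: "causal_gaussian_pair (mean a w) (mean b w) (noise_scale w)"
  by unfold_locales (auto simp: causal_mean causal_noise_scale noise_scale_pos
      intro: measurable_fixed_fst[where F="\<lambda>w. mean _ w _"] measurable_fixed_fst[where F="\<lambda>w. noise_scale w _"])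

lemma obs_seq_bump: "obs_seq (bump c) \<sigma> \<alpha> T ismain pt w = run (mean c w) (noise_scale w)"
  unfolding obs_seq_eq_run mean_def[abs_def] noise_scale_def[abs_def] ..

lemma regret_bump:
  assumes "c \<in> D"
  shows "regret D (bump c) T C ismain pt w ys = (\<Sum>i<T + C. if counted w ys i then \<beta> - bump c (pt i w ys) else 0)"
  unfolding regret_def counted_def SUP_gauss_bump[OF assms less_imp_le[OF \<beta>_pos]] ..

lemma regret_bump_nonneg: "c \<in> D \<Longrightarrow> 0 \<le> regret D (bump c) T C ismain pt w ys"
  unfolding regret_bump using gauss_bump_le[OF less_imp_le[OF \<beta>_pos]] by (intro sum_nonneg) auto

lemma regret_bump_le:
  assumes "c \<in> D"
  shows "regret D (bump c) T C ismain pt w ys \<le> \<beta> * real (T + C)"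
proof -
  have "regret D (bump c) T C ismain pt w ys \<le> (\<Sum>i<T + C. \<beta>)"
    unfolding regret_bump[OF assms]
    using gauss_bump_nonneg[OF less_imp_le[OF \<beta>_pos]] \<beta>_pos by (intro sum_mono) auto
  then show ?thesis by (simp add: mult.commute)
qed

lemma prefix_determined_regret_bump:
  assumes "c \<in> D"
  shows "prefix_determined (T + C) (regret D (bump c) T C ismain pt w)"
  unfolding prefix_determined_def regret_bump[OF assms] counted_def
proof (intro allI impI sum.cong refl)
  fix ys ys' :: "nat \<Rightarrow> real" and i assume "\<forall>j<T + C. ys j = ys' j" "i \<in> {..<T + C}"
  then have prefix: "\<And>j. j < i \<Longrightarrow> ys j = ys' j" by auto
  show "(if ismain i w ys \<and> card {j. j < i \<and> ismain j w ys} < T then \<beta> - bump c (pt i w ys) else 0)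
      = (if ismain i w ys' \<and> card {j. j < i \<and> ismain j w ys'} < T then \<beta> - bump c (pt i w ys') else 0)"
    using ismain_pt_prefix_cong[OF prefix] card_main_prefix_cong[OF prefix] by simp
qed

lemma measurable_regret_bump [measurable]:
  "c \<in> D \<Longrightarrow> (\<lambda>p. regret D (bump c) T C ismain pt (fst p) (snd p)) \<in> borel_measurable (seq_borel \<Otimes>\<^sub>M seq_borel)"
  unfolding regret_bump by measurable

text \<open>Exactly \<open>T\<close> queries are counted, and each contributes at least \<open>bump_gap\<close> to the sum.\<close>

lemma regret_bump_sum_ge:
  "bump_gap \<beta> l a b * real T \<le> regret D (bump a) T C ismain pt w ys + regret D (bump b) T C ismain pt w ys"
proof -
  have "card {i. i < T + C \<and> counted w ys i} = T"
    using card_filter_rank_less[of "T + C" "\<lambda>i. ismain i w ys" T] enough_main_queries[of w ys]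
    by (simp add: counted_def conj_assoc)
  then have "bump_gap \<beta> l a b * real T = (\<Sum>i<T + C. if counted w ys i then bump_gap \<beta> l a b else 0)"
    by (simp add: sum.If_cases Int_def)
  also have "\<dots> \<le> regret D (bump a) T C ismain pt w ys + regret D (bump b) T C ismain pt w ys"
    unfolding regret_bump[OF a_in_D] regret_bump[OF b_in_D] sum.distrib[symmetric]
  proof (intro sum_mono)
    fix i
    show "(if counted w ys i then bump_gap \<beta> l a b else 0)
        \<le> (if counted w ys i then \<beta> - bump a (pt i w ys) else 0) + (if counted w ys i then \<beta> - bump b (pt i w ys) else 0)"
      using bump_gap_le_regret[OF less_imp_le[OF \<beta>_pos], of l a b "pt i w ys"] l_pos by simp
  qed
  finally show ?thesis .
qed

lemma drift_ratio_bumps_sq_le: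
  fixes w z :: "nat \<Rightarrow> real"
  defines "y \<equiv> run (mean b w) (noise_scale w) z"
  shows "(drift_ratio (mean a w) (mean b w) (noise_scale w) i z)\<^sup>2
       \<le> (\<beta> / \<sigma>)\<^sup>2 * (1 / (1 + real (T - Suc (card {j. j < i \<and> ismain j w y})) powr \<alpha>))"
proof -
  define x where "x = pt i w y"
  define p where "p = real (T - Suc (card {j. j < i \<and> ismain j w y})) powr \<alpha>"
  have p_nonneg: "0 \<le> p" unfolding p_def by simp
  have "\<bar>bump a x - bump b x\<bar> \<le> \<beta>"
    using gauss_bump_le[of \<beta> l a x] gauss_bump_nonneg[of \<beta> l a x]
      gauss_bump_le[of \<beta> l b x] gauss_bump_nonneg[of \<beta> l b x] \<beta>_pos
    by (simp add: abs_le_iff)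
  then have "(bump a x - bump b x)\<^sup>2 \<le> \<beta>\<^sup>2"
    using abs_le_square_iff[of "bump a x - bump b x" \<beta>] \<beta>_pos by simp
  then have "(bump a x - bump b x)\<^sup>2 / (\<sigma>\<^sup>2 * (1 + p)) \<le> \<beta>\<^sup>2 / (\<sigma>\<^sup>2 * (1 + p))"
    using p_nonneg by (intro divide_right_mono) auto
  moreover have "drift_ratio (mean a w) (mean b w) (noise_scale w) i z = (bump a x - bump b x) / (\<sigma> * sqrt (1 + p))"
    unfolding drift_ratio_def y_def[symmetric] mean_def noise_scale_def step_of_def x_def p_def ..
  ultimately show ?thesis
    using p_nonneg by (simp add: power_divide power_mult_distrib p_def)
qed

lemma drift_ratio_bumps_sum_le:
  "(\<Sum>i<T + C. (drift_ratio (mean a w) (mean b w) (noise_scale w) i z)\<^sup>2) \<le> info_bound \<beta> \<sigma> \<alpha> C"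
proof -
  define y where "y = run (mean b w) (noise_scale w) z"
  define u where "u k = 1 / (1 + real k powr \<alpha>)" for k :: nat
  have "(\<Sum>i<T + C. (drift_ratio (mean a w) (mean b w) (noise_scale w) i z)\<^sup>2)
      \<le> (\<beta> / \<sigma>)\<^sup>2 * (\<Sum>i<T + C. u (T - Suc (card {j. j < i \<and> ismain j w y})))"
    unfolding sum_distrib_left u_def y_def by (intro sum_mono drift_ratio_bumps_sq_le)
  also have "\<dots> \<le> (\<beta> / \<sigma>)\<^sup>2 * ((real C + 1) * (suminf u + real C * u 0))"
    using summable_inverse_one_plus_powr[OF \<alpha>_gt_1] enough_main_queries
    by (intro mult_left_mono sum_weight_rank_le) (auto simp: u_def add_pos_nonneg)
  finally show ?thesis unfolding info_bound_def u_def by simp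
qed

lemma nn_integral_realized_regret:
  assumes "c \<in> D"
  shows "(\<integral>\<^sup>+ z. ennreal (realized_regret c (w, z)) \<partial>seq_measure)
       = (\<integral>\<^sup>+ z. ennreal (regret D (bump c) T C ismain pt w (run (mean c w) (noise_scale w) z)) \<partial>std_normal_vec (T + C))"
  unfolding realized_regret_def fst_conv snd_conv obs_seq_bump
proof (rule seq_measure_prefix)
  have "run (mean c w) (noise_scale w) \<in> measurable (std_normal_vec (T + C)) seq_borel"
    by (intro measurable_run_fixed measurable_fixed_fst[where F="\<lambda>w. mean c w _"]
        measurable_fixed_fst[where F="\<lambda>w. noise_scale w _"] measurable_mean measurable_noise_scale)
      simp
  moreover have "regret D (bump c) T C ismain pt w \<in> borel_measurable seq_borel"
    using measurable_fixed_fst[OF measurable_regret_bump[OF assms]] .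
  ultimately show "(\<lambda>z. ennreal (regret D (bump c) T C ismain pt w (run (mean c w) (noise_scale w) z)))
      \<in> borel_measurable (std_normal_vec (T + C))"
    by measurable
  show "ennreal (regret D (bump c) T C ismain pt w (run (mean c w) (noise_scale w) (restrict z {..<T + C})))
      = ennreal (regret D (bump c) T C ismain pt w (run (mean c w) (noise_scale w) z))" for z
    by (rule arg_cong[where f=ennreal], rule prefix_determinedD[OF prefix_determined_regret_bump[OF assms]])
      (auto intro: run_prefix_cong)
qed

lemma nn_integral_realized_regret_sum_ge:
  "ennreal (bump_gap \<beta> l a b * real T * exp (- info_bound \<beta> \<sigma> \<alpha> C / 4) / 2)
     \<le> (\<integral>\<^sup>+ z. ennreal (realized_regret a (w, z)) \<partial>seq_measure)
       + (\<integral>\<^sup>+ z. ennreal (realized_regret b (w, z)) \<partial>seq_measure)"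
proof -
  interpret causal_gaussian_pair "mean a w" "mean b w" "noise_scale w"
    by (rule causal_gaussian_pair_bumps)
  show ?thesis
    unfolding nn_integral_realized_regret[OF a_in_D] nn_integral_realized_regret[OF b_in_D]
    using measurable_fixed_fst[OF measurable_regret_bump[OF a_in_D]]
      measurable_fixed_fst[OF measurable_regret_bump[OF b_in_D]]
      regret_bump_nonneg[OF a_in_D] regret_bump_nonneg[OF b_in_D] regret_bump_sum_ge
      less_imp_le[OF bump_gap_ab_pos]
      prefix_determined_regret_bump[OF a_in_D] drift_ratio_bumps_sum_le
    by (intro two_point_lower_bound) (auto simp: mult.commute)
qed

lemma measurable_realized_regret [measurable]:
  assumes "c \<in> D"
  shows "realized_regret c \<in> borel_measurable (seq_measure \<Otimes>\<^sub>M seq_measure)"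
proof -
  have "sets (seq_measure \<Otimes>\<^sub>M seq_measure) = sets (seq_borel \<Otimes>\<^sub>M seq_borel)"
    by (intro sets_pair_measure_cong sets_seq_measure)
  then have sets_eq: "measurable (seq_measure \<Otimes>\<^sub>M seq_measure) M = measurable (seq_borel \<Otimes>\<^sub>M seq_borel) M" for M
    by (rule measurable_cong_sets) simp
  have "(\<lambda>p. run (mean c (fst p)) (noise_scale (fst p)) (snd p)) \<in> measurable (seq_borel \<Otimes>\<^sub>M seq_borel) seq_borel"
    by (rule measurable_run[unfolded split_beta'], rule measurable_mean, rule measurable_noise_scale)
      (rule measurable_seq_borel_component[OF measurable_ident_sets[OF refl]])
  then have "(\<lambda>p. (fst p, run (mean c (fst p)) (noise_scale (fst p)) (snd p)))
      \<in> measurable (seq_borel \<Otimes>\<^sub>M seq_borel) (seq_borel \<Otimes>\<^sub>M seq_borel)"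
    by (intro measurable_Pair measurable_fst)
  from measurable_comp[OF this measurable_regret_bump[OF assms]] show ?thesis
    unfolding sets_eq realized_regret_def[abs_def] obs_seq_bump by (simp only: comp_def fst_conv snd_conv)
qed

lemma nn_integral_realized_regret_eq_expected_regret:
  assumes "c \<in> D"
  shows "(\<integral>\<^sup>+ p. ennreal (realized_regret c p) \<partial>(seq_measure \<Otimes>\<^sub>M seq_measure))
       = ennreal (expected_regret D (bump c) \<sigma> \<alpha> T C ismain pt)"
proof -
  interpret prob_space "seq_measure \<Otimes>\<^sub>M seq_measure"
    by (intro prob_space_pair prob_space_seq_measure)
  have "integrable (seq_measure \<Otimes>\<^sub>M seq_measure) (realized_regret c)"
  proof (rule integrable_const_bound[where B="\<beta> * real (T + C)"])
    show "AE p in seq_measure \<Otimes>\<^sub>M seq_measure. norm (realized_regret c p) \<le> \<beta> * real (T + C)"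
      using regret_bump_nonneg[OF assms] regret_bump_le[OF assms] by (simp add: realized_regret_def)
  qed (rule measurable_realized_regret[OF assms])
  moreover have "AE p in seq_measure \<Otimes>\<^sub>M seq_measure. 0 \<le> realized_regret c p"
    using regret_bump_nonneg[OF assms] by (simp add: realized_regret_def)
  moreover have "expected_regret D (bump c) \<sigma> \<alpha> T C ismain pt
      = (\<integral>p. realized_regret c p \<partial>(seq_measure \<Otimes>\<^sub>M seq_measure))"
    unfolding expected_regret_def realized_regret_def ..
  ultimately show ?thesis
    using nn_integral_eq_integral by metis
qed

lemma expected_regret_bumps_sum_ge:
  "bump_gap \<beta> l a b * real T * exp (- info_bound \<beta> \<sigma> \<alpha> C / 4) / 2
     \<le> expected_regret D (bump a) \<sigma> \<alpha> T C ismain pt + expected_regret D (bump b) \<sigma> \<alpha> T C ismain pt"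
proof -
  note [measurable] = measurable_realized_regret[OF a_in_D] measurable_realized_regret[OF b_in_D]
  interpret seq: prob_space seq_measure by (rule prob_space_seq_measure)
  let ?X = "bump_gap \<beta> l a b * real T * exp (- info_bound \<beta> \<sigma> \<alpha> C / 4) / 2"
  have "ennreal ?X = (\<integral>\<^sup>+ w. ennreal ?X \<partial>seq_measure)"
    by (simp add: seq.emeasure_space_1)
  also have "\<dots> \<le> (\<integral>\<^sup>+ w. \<integral>\<^sup>+ z. ennreal (realized_regret a (w, z)) + ennreal (realized_regret b (w, z))
      \<partial>seq_measure \<partial>seq_measure)"
  proof (intro nn_integral_mono)
    fix w assume "w \<in> space seq_measure"
    then show "ennreal ?X \<le> (\<integral>\<^sup>+ z. ennreal (realized_regret a (w, z)) + ennreal (realized_regret b (w, z)) \<partial>seq_measure)"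
      using nn_integral_realized_regret_sum_ge[of w]
      by (subst nn_integral_add) (auto intro: measurable_Pair2)
  qed
  also have "\<dots> = (\<integral>\<^sup>+ p. ennreal (realized_regret a p) \<partial>(seq_measure \<Otimes>\<^sub>M seq_measure))
      + (\<integral>\<^sup>+ p. ennreal (realized_regret b p) \<partial>(seq_measure \<Otimes>\<^sub>M seq_measure))"
    by (subst seq.nn_integral_fst) (simp_all add: nn_integral_add)
  also have "\<dots> = ennreal (expected_regret D (bump a) \<sigma> \<alpha> T C ismain pt + expected_regret D (bump b) \<sigma> \<alpha> T C ismain pt)"
    using nn_integral_realized_regret_eq_expected_regret[OF a_in_D]
      nn_integral_realized_regret_eq_expected_regret[OF b_in_D]
    by (simp add: expected_regret_def integral_nonneg realized_regret_def regret_bump_nonneg a_in_D b_in_D)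
  finally show ?thesis
    by (subst (asm) ennreal_le_iff) (auto simp: expected_regret_def regret_bump_nonneg a_in_D b_in_D)
qed

lemma exists_bump_expected_regret_ge:
  "\<exists>c\<in>{a, b}. bump_gap \<beta> l a b * exp (- info_bound \<beta> \<sigma> \<alpha> C / 4) / 4 * real T
     \<le> expected_regret D (bump c) \<sigma> \<alpha> T C ismain pt"
  using expected_regret_bumps_sum_ge by (auto simp: field_simps)

end

theorem proposition5p1:
  fixes D :: "(real ^ 'd) set" and Mk l B \<sigma> \<alpha> :: real and C :: nat
  assumes "compact D" and "convex D" and "\<exists>x\<in>D. \<exists>y\<in>D. x \<noteq> y"
    and "Mk > 0" and "l > 0" and "B > 0" and "\<sigma> > 0" and "\<alpha> > 1"
  shows "\<exists>c>0. \<exists>T0. \<forall>T\<ge>T0. \<forall>ismain pt.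
           admissible_alg D C T ismain pt \<longrightarrow>
           (\<exists>f. rkhs_ball (se_kernel Mk l) D B f \<and>
                expected_regret D f \<sigma> \<alpha> T C ismain pt \<ge> c * real T)"
proof -
  obtain a b where ab: "a \<in> D" "b \<in> D" "a \<noteq> b" using assms(3) by blast
  define c where "c = bump_gap (B * Mk) l a b * exp (- info_bound (B * Mk) \<sigma> \<alpha> C / 4) / 4"
  have "\<exists>f. rkhs_ball (se_kernel Mk l) D B f \<and> c * real T \<le> expected_regret D f \<sigma> \<alpha> T C ismain pt"
    if "admissible_alg D C T ismain pt" for T ismain pt
  proof -
    interpret hard_instance D a b Mk l B \<sigma> \<alpha> C T ismain pt
      using ab assms(4-8) that by unfold_locales
    obtain e where "e \<in> {a, b}" "c * real T \<le> expected_regret D (bump e) \<sigma> \<alpha> T C ismain pt"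
      using exists_bump_expected_regret_ge unfolding c_def by blast
    moreover have "rkhs_ball (se_kernel Mk l) D B (bump e)"
      using \<open>e \<in> {a, b}\<close> ab assms(4,6) by (auto intro: rkhs_ball_se_kernel_bump)
    ultimately show ?thesis by blast
  qed
  moreover have "c > 0"
    using bump_gap_pos[of "B * Mk" l a b] ab assms(4-6) by (simp add: c_def)
  ultimately show ?thesis by blast
qed

end
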